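(* There exists a family $\mathcal F_1$ of $5$ axis-parallel rectangles such that $\pi_L(\mathcal F_1)\ge \frac{6}{5}\,\pi(\mathcal F_1)$.
   Context: For a finite family $\mathcal F$ of closed axis-parallel rectangles in the plane, a point set $P\subset\mathbb R^2$ is $\mathcal F$-piercing if every translate of every rectangle in $\mathcal F$ contains a point of $P$. The density of a point set $P$ is $\limsup_{r\to\infty} |P\cap[-r,r]^2|/(2r)^2$. $\pi(\mathcal F)$ is the infimum of the densities of $\mathcal F$-piercing point sets, and $\pi_L(\mathcal F)$ is the infimum of the densities of $\mathcal F$-piercing lattices, where a lattice $\{iu+jv:i,j\in\mathbb Z\}$ ($u,v$ linearly independent) has density $1/|\det[u,v]|$. *)

theory Defs
  imports Complex_Main "HOL-Library.Extended_Real" "HOL-Library.Liminf_Limsup"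
begin

text \<open>A closed axis-parallel rectangle is represented by its side lengths (a,b), a,b > 0;
  its translate by (x,y) is the closed box [x,x+a] x [y,y+b].\<close>

definition is_rect :: "real \<times> real \<Rightarrow> bool" where
  "is_rect R \<longleftrightarrow> fst R > 0 \<and> snd R > 0"

definition translate_rect :: "real \<times> real \<Rightarrow> real \<times> real \<Rightarrow> (real \<times> real) set" where
  "translate_rect R t = {fst t .. fst t + fst R} \<times> {snd t .. snd t + snd R}"

definition piercing :: "(real \<times> real) set \<Rightarrow> (real \<times> real) set \<Rightarrow> bool" where
  "piercing F P \<longleftrightarrow> (\<forall>R\<in>F. \<forall>t. \<exists>p\<in>P. p \<in> translate_rect R t)"

definition ecount :: "'a set \<Rightarrow> ereal" where
  "ecount A = (if finite A then ereal (real (card A)) else \<infinity>)"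

definition density :: "(real \<times> real) set \<Rightarrow> ereal" where
  "density P = Limsup at_top
     (\<lambda>r::real. ecount (P \<inter> ({-r..r} \<times> {-r..r})) * ereal (1 / (2 * r)^2))"

definition lattice :: "real \<times> real \<Rightarrow> real \<times> real \<Rightarrow> (real \<times> real) set" where
  "lattice u v = {(of_int i * fst u + of_int j * fst v, of_int i * snd u + of_int j * snd v)
                   | i j :: int. True}"

definition det2 :: "real \<times> real \<Rightarrow> real \<times> real \<Rightarrow> real" where
  "det2 u v = fst u * snd v - snd u * fst v"

definition pi_dens :: "(real \<times> real) set \<Rightarrow> ereal" where
  "pi_dens F = Inf {density P | P. piercing F P}"

definition pi_L :: "(real \<times> real) set \<Rightarrow> ereal" where
  "pi_L F = Inf {ereal (1 / \<bar>det2 u v\<bar>) | u v. det2 u v \<noteq> 0 \<and> piercing F (lattice u v)}"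

end

(*
  Write a basis of a lattice as l = (-a, b), r = (g, d) with a, b, g, d >= 0.  Its covolume is
  a d + b g, and the box [-a, g] x [0, b + d], which has 0, l, r and l + r on its four sides,
  contains no lattice point in its interior; so if the lattice pierces F1, no rectangle of F1 is
  strictly smaller than this box in both directions.  Replacing l by l - r (when d <= b) or r by
  r - l (when b <= d) gives another such basis, with a wider and lower box, as in the Euclidean
  algorithm.  Starting from a basis with a, g <= 1 < a + g, at most four of these steps already
  force a d + b g <= 5: in every case the constraints bound a and g, or b and d, by constants
  that turn a d + b g <= 5 into a linear consequence.  Hence pi_L F1 >= 1/5.  On the other hand
  the set of integer points (i, j) with j mod 6 = pattern_row i, which has one point in every
  row and column of each 6 x 6 block, pierces F1 and has density 1/6.
*)

theory Submission
  imports Defs "HOL-Library.Product_Plus" "HOL-Real_Asymp.Real_Asymp"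
begin

lemma mem_lattice_iff:
  "z \<in> lattice u v \<longleftrightarrow>
     (\<exists>i j::int. z = (of_int i * fst u + of_int j * fst v, of_int i * snd u + of_int j * snd v))"
  unfolding lattice_def by auto

lemma lattice_add:
  assumes "p \<in> lattice u v" "q \<in> lattice u v"
  shows "p + q \<in> lattice u v"
proof -
  obtain i j i' j' :: int
    where "p = (of_int i * fst u + of_int j * fst v, of_int i * snd u + of_int j * snd v)"
      and "q = (of_int i' * fst u + of_int j' * fst v, of_int i' * snd u + of_int j' * snd v)"
    using assms unfolding mem_lattice_iff by blast
  then show ?thesis
    unfolding mem_lattice_iff by (intro exI[of _ "i + i'"] exI[of _ "j + j'"]) (simp add: algebra_simps)
qed

lemma lattice_uminus:
  assumes "p \<in> lattice u v"
  shows "- p \<in> lattice u v"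
proof -
  obtain i j :: int
    where "p = (of_int i * fst u + of_int j * fst v, of_int i * snd u + of_int j * snd v)"
    using assms unfolding mem_lattice_iff by blast
  then show ?thesis
    unfolding mem_lattice_iff by (intro exI[of _ "- i"] exI[of _ "- j"]) (simp add: algebra_simps)
qed

lemma lattice_diff: "p \<in> lattice u v \<Longrightarrow> q \<in> lattice u v \<Longrightarrow> p - q \<in> lattice u v"
  using lattice_add lattice_uminus by (metis diff_conv_add_uminus)

lemma det2_lattice_multiple:
  assumes "p \<in> lattice u v" "q \<in> lattice u v"
  shows "\<exists>k::int. det2 p q = of_int k * det2 u v"
proof -
  obtain i j i' j' :: int
    where "p = (of_int i * fst u + of_int j * fst v, of_int i * snd u + of_int j * snd v)"
      and "q = (of_int i' * fst u + of_int j' * fst v, of_int i' * snd u + of_int j' * snd v)"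
    using assms unfolding mem_lattice_iff by blast
  then show ?thesis
    by (intro exI[of _ "i * j' - j * i'"]) (simp add: det2_def algebra_simps)
qed

lemma det2_lattice_unimodular:
  assumes "p \<in> lattice u v" "q \<in> lattice u v"
    and "0 < \<bar>det2 p q\<bar>" "\<bar>det2 p q\<bar> < 2 * \<bar>det2 u v\<bar>"
  shows "\<bar>det2 p q\<bar> = \<bar>det2 u v\<bar>"
proof -
  obtain k :: int where k: "det2 p q = of_int k * det2 u v"
    using det2_lattice_multiple[OF assms(1,2)] by blast
  have "0 < \<bar>det2 u v\<bar>" using assms(3,4) by linarith
  with k assms(3,4) have "0 < \<bar>k\<bar>" "\<bar>real_of_int k\<bar> < 2"
    by (auto simp: abs_mult)
  then have "\<bar>k\<bar> = 1" by linarith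
  then show ?thesis
    using k by (simp add: abs_mult flip: of_int_abs)
qed

lemma lattice_subset_unimodular:
  assumes D: "det2 u v \<noteq> 0" and l: "l \<in> lattice u v" and r: "r \<in> lattice u v"
    and lr: "\<bar>det2 l r\<bar> = \<bar>det2 u v\<bar>"
  shows "lattice u v \<subseteq> lattice l r"
proof
  fix z assume z: "z \<in> lattice u v"
  obtain k1 k2 :: int where k1: "det2 z r = of_int k1 * det2 u v"
    and k2: "det2 l z = of_int k2 * det2 u v"
    using det2_lattice_multiple[OF z r] det2_lattice_multiple[OF l z] by blast
  obtain s :: int where s: "det2 u v = of_int s * det2 l r"
    using lr by (cases "det2 u v = det2 l r") (auto simp: abs_eq_iff intro: that[of 1] that[of "- 1"])
  have c: "det2 l r \<noteq> 0" using D lr by auto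
  have zr: "det2 z r = of_int (s * k1) * det2 l r" and lz: "det2 l z = of_int (s * k2) * det2 l r"
    using k1 k2 s by simp_all
  have "det2 l r * fst z = det2 z r * fst l + det2 l z * fst r"
    "det2 l r * snd z = det2 z r * snd l + det2 l z * snd r"
    by (simp_all add: det2_def algebra_simps)
  then have "det2 l r * fst z = det2 l r * (of_int (s * k1) * fst l + of_int (s * k2) * fst r)"
    "det2 l r * snd z = det2 l r * (of_int (s * k1) * snd l + of_int (s * k2) * snd r)"
    unfolding zr lz by (simp_all add: algebra_simps)
  then have "fst z = of_int (s * k1) * fst l + of_int (s * k2) * fst r"
    "snd z = of_int (s * k1) * snd l + of_int (s * k2) * snd r"
    using c by simp_all
  then show "z \<in> lattice l r"
    unfolding mem_lattice_iff by (intro exI[of _ "s * k1"] exI[of _ "s * k2"]) (simp add: prod_eq_iff)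
qed

lemma abs_det2_le:
  assumes "\<bar>fst z\<bar> \<le> R" "\<bar>snd z\<bar> \<le> R"
  shows "\<bar>det2 z w\<bar> \<le> R * (\<bar>fst w\<bar> + \<bar>snd w\<bar>)"
    and "\<bar>det2 w z\<bar> \<le> R * (\<bar>fst w\<bar> + \<bar>snd w\<bar>)"
proof -
  have "\<bar>fst z\<bar> * \<bar>snd w\<bar> \<le> R * \<bar>snd w\<bar>" "\<bar>snd z\<bar> * \<bar>fst w\<bar> \<le> R * \<bar>fst w\<bar>"
    using assms by (simp_all add: mult_right_mono)
  moreover have "\<bar>det2 z w\<bar> \<le> \<bar>fst z\<bar> * \<bar>snd w\<bar> + \<bar>snd z\<bar> * \<bar>fst w\<bar>"
    unfolding det2_def abs_mult[symmetric] by (rule abs_triangle_ineq4)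
  moreover have "\<bar>det2 w z\<bar> \<le> \<bar>fst z\<bar> * \<bar>snd w\<bar> + \<bar>snd z\<bar> * \<bar>fst w\<bar>"
    unfolding det2_def abs_mult[symmetric] by (subst abs_minus_commute) (simp only: mult.commute abs_triangle_ineq4)
  ultimately show "\<bar>det2 z w\<bar> \<le> R * (\<bar>fst w\<bar> + \<bar>snd w\<bar>)"
    and "\<bar>det2 w z\<bar> \<le> R * (\<bar>fst w\<bar> + \<bar>snd w\<bar>)"
    by (simp_all add: distrib_left)
qed

lemma finite_lattice_points_in_square:
  assumes D: "det2 u v \<noteq> 0"
  shows "finite {z \<in> lattice u v. \<bar>fst z\<bar> \<le> R \<and> \<bar>snd z\<bar> \<le> R}"
proof -
  define K where "K = R * (\<bar>fst u\<bar> + \<bar>snd u\<bar> + \<bar>fst v\<bar> + \<bar>snd v\<bar>) / \<bar>det2 u v\<bar>"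
  define M where "M = \<lceil>K\<rceil>"
  let ?point = "\<lambda>(i::int, j::int). (of_int i * fst u + of_int j * fst v, of_int i * snd u + of_int j * snd v)"
  have "{z \<in> lattice u v. \<bar>fst z\<bar> \<le> R \<and> \<bar>snd z\<bar> \<le> R} \<subseteq> ?point ` ({-M..M} \<times> {-M..M})"
  proof
    fix z assume "z \<in> {z \<in> lattice u v. \<bar>fst z\<bar> \<le> R \<and> \<bar>snd z\<bar> \<le> R}"
    then obtain i j :: int where z: "z = ?point (i, j)" and zR: "\<bar>fst z\<bar> \<le> R" "\<bar>snd z\<bar> \<le> R"
      unfolding mem_lattice_iff by auto
    have "det2 z v = of_int i * det2 u v" "det2 u z = of_int j * det2 u v"
      using z by (simp_all add: det2_def algebra_simps)
    then have "\<bar>of_int i\<bar> * \<bar>det2 u v\<bar> \<le> R * (\<bar>fst v\<bar> + \<bar>snd v\<bar>)"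
      "\<bar>of_int j\<bar> * \<bar>det2 u v\<bar> \<le> R * (\<bar>fst u\<bar> + \<bar>snd u\<bar>)"
      using abs_det2_le(1)[OF zR, of v] abs_det2_le(2)[OF zR, of u] by (simp_all add: abs_mult)
    moreover have "0 \<le> R * \<bar>fst u\<bar>" "0 \<le> R * \<bar>snd u\<bar>" "0 \<le> R * \<bar>fst v\<bar>" "0 \<le> R * \<bar>snd v\<bar>"
      using zR by simp_all
    ultimately have "\<bar>of_int i\<bar> \<le> K" "\<bar>of_int j\<bar> \<le> K"
      using D unfolding K_def by (simp_all add: pos_le_divide_eq algebra_simps)
    then have "real_of_int \<bar>i\<bar> \<le> of_int M" "real_of_int \<bar>j\<bar> \<le> of_int M"
      using le_of_int_ceiling[of K] unfolding M_def by linarith+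
    then show "z \<in> ?point ` ({-M..M} \<times> {-M..M})"
      using z by (intro image_eqI[of _ _ "(i, j)"]) auto
  qed
  then show ?thesis by (rule finite_subset) simp
qed

lemma lattice_point_in_strip:
  assumes D: "det2 u v \<noteq> 0" and pierce: "piercing F (lattice u v)" and R: "(w, h) \<in> F"
  shows "\<exists>z\<in>lattice u v. 0 < fst z \<and> fst z \<le> w \<and> c \<le> snd z \<and> snd z \<le> c + h"
proof -
  define B where "B = \<bar>w\<bar> + \<bar>c\<bar> + \<bar>h\<bar> + 1"
  define S where "S = {z \<in> lattice u v. \<bar>fst z\<bar> \<le> B \<and> \<bar>snd z\<bar> \<le> B \<and> w < fst z}"
  have "finite S"
    using finite_lattice_points_in_square[OF D, of B] by (rule rev_finite_subset) (auto simp: S_def)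
  \<comment> \<open>Shifting the box right by a small enough e > 0 catches no lattice point beyond x = w.\<close>
  moreover have "\<forall>\<^sub>F e in at_right 0. e < fst z - w" if "z \<in> S" for z
    using that by (intro eventually_at_rightI[of 0 "fst z - w"]) (auto simp: S_def)
  ultimately have "\<forall>\<^sub>F e in at_right 0. \<forall>z\<in>S. e < fst z - w"
    by (simp add: eventually_ball_finite)
  moreover have "\<forall>\<^sub>F e in at_right 0. 0 < e \<and> e < (1::real)"
    by (rule eventually_at_rightI[of _ 1]) auto
  ultimately have "\<forall>\<^sub>F e in at_right 0. (0 < e \<and> e < 1) \<and> (\<forall>z\<in>S. e < fst z - w)"
    by (rule eventually_conj[rotated])
  then obtain e where e: "0 < e" "e < 1" and eS: "\<forall>z\<in>S. e < fst z - w"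
    using eventually_happens'[OF trivial_limit_at_right_real] by blast
  obtain p where p: "p \<in> lattice u v" "p \<in> translate_rect (w, h) (e, c)"
    using pierce R unfolding piercing_def by blast
  then have box: "e \<le> fst p" "fst p \<le> e + w" "c \<le> snd p" "snd p \<le> c + h"
    by (auto simp: translate_rect_def mem_Times_iff)
  have "fst p \<le> w"
  proof (rule ccontr)
    assume "\<not> fst p \<le> w"
    with p(1) box e have "p \<in> S" by (auto simp: S_def B_def)
    with eS box show False by auto
  qed
  with p(1) box e show ?thesis by (intro bexI[of _ p]) auto
qed

definition quadrant_bases :: "real \<times> real \<Rightarrow> real \<times> real \<Rightarrow> (real \<times> real \<times> real \<times> real) set" where
  "quadrant_bases u v = {(a, b, g, d). 0 \<le> a \<and> 0 \<le> b \<and> 0 \<le> g \<and> 0 \<le> d \<and>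
     (- a, b) \<in> lattice u v \<and> (g, d) \<in> lattice u v \<and> a * d + b * g = \<bar>det2 u v\<bar>}"

lemma of_int_mult_nonneg_bounds:
  fixes x :: real
  assumes "0 \<le> x"
  shows "1 \<le> i \<Longrightarrow> x \<le> of_int i * x" and "i \<le> 0 \<Longrightarrow> of_int i * x \<le> 0"
  using assms mult_right_mono[of 1 "of_int i" x] by (simp_all add: mult_nonpos_nonneg)

lemma quadrant_basis_box_lattice_free:
  assumes D: "det2 u v \<noteq> 0" and s: "(a, b, g, d) \<in> quadrant_bases u v"
    and W: "W < a + g" and H: "H < b + d"
  shows "\<exists>t. \<forall>p\<in>lattice u v. p \<notin> translate_rect (W, H) t"
proof -
  have nonneg: "0 \<le> a" "0 \<le> b" "0 \<le> g" "0 \<le> d"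
    and l: "(- a, b) \<in> lattice u v" and r: "(g, d) \<in> lattice u v" and area: "a * d + b * g = \<bar>det2 u v\<bar>"
    using s by (auto simp: quadrant_bases_def)
  have "\<bar>det2 (- a, b) (g, d)\<bar> = \<bar>det2 u v\<bar>"
    using area nonneg by (simp add: det2_def)
  then have basis: "lattice u v \<subseteq> lattice (- a, b) (g, d)"
    by (rule lattice_subset_unimodular[OF D l r])
  define e where "e = min (a + g - W) (b + d - H) / 2"
  have e: "0 < e" "e < a + g - W" "e < b + d - H"
    using W H unfolding e_def by auto
  have "p \<notin> translate_rect (W, H) (e - a, e)" if pL: "p \<in> lattice u v" for p
  proof
    assume "p \<in> translate_rect (W, H) (e - a, e)"
    then have box: "e - a \<le> fst p" "fst p \<le> e - a + W" "e \<le> snd p" "snd p \<le> e + H"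
      by (auto simp: translate_rect_def mem_Times_iff)
    from pL basis have "p \<in> lattice (- a, b) (g, d)" by blast
    then obtain i j :: int where p: "fst p = - (of_int i * a) + of_int j * g" "snd p = of_int i * b + of_int j * d"
      unfolding mem_lattice_iff by auto
    consider "1 \<le> i" "1 \<le> j" | "1 \<le> i" "j \<le> 0" | "i \<le> 0" "1 \<le> j" | "i \<le> 0" "j \<le> 0"
      by linarith
    then show False
    proof cases
      case 1
      then show False using of_int_mult_nonneg_bounds(1)[of b i] of_int_mult_nonneg_bounds(1)[of d j]
        nonneg box p e by linarith
    next
      case 2
      then show False using of_int_mult_nonneg_bounds(1)[of a i] of_int_mult_nonneg_bounds(2)[of g j]
        nonneg box p e by linarith
    next
      case 3
      then show False using of_int_mult_nonneg_bounds(2)[of a i] of_int_mult_nonneg_bounds(1)[of g j]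
        nonneg box p e by linarith
    next
      case 4
      then show False using of_int_mult_nonneg_bounds(2)[of b i] of_int_mult_nonneg_bounds(2)[of d j]
        nonneg box p e by linarith
    qed
  qed
  then show ?thesis by blast
qed

definition box_admissible :: "(real \<times> real) set \<Rightarrow> (real \<times> real \<times> real \<times> real) set \<Rightarrow> bool" where
  "box_admissible F A \<longleftrightarrow> (\<forall>a b g d. (a, b, g, d) \<in> A \<longrightarrow> 0 \<le> a \<and> 0 \<le> b \<and> 0 \<le> g \<and> 0 \<le> d \<and>
     (\<forall>R\<in>F. \<not> (fst R < a + g \<and> snd R < b + d)))"

lemma box_admissible_quadrant_bases:
  assumes D: "det2 u v \<noteq> 0" and pierce: "piercing F (lattice u v)"
  shows "box_admissible F (quadrant_bases u v)"
  unfolding box_admissible_def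
proof (intro allI impI)
  fix a b g d assume s: "(a, b, g, d) \<in> quadrant_bases u v"
  have "\<not> (fst R < a + g \<and> snd R < b + d)" if "R \<in> F" for R
    using quadrant_basis_box_lattice_free[OF D s, of "fst R" "snd R"] pierce that
    unfolding piercing_def by fastforce
  with s show "0 \<le> a \<and> 0 \<le> b \<and> 0 \<le> g \<and> 0 \<le> d \<and>
      (\<forall>R\<in>F. \<not> (fst R < a + g \<and> snd R < b + d))"
    by (auto simp: quadrant_bases_def)
qed

definition reduction_closed :: "(real \<times> real \<times> real \<times> real) set \<Rightarrow> bool" where
  "reduction_closed A \<longleftrightarrow> (\<forall>a b g d. (a, b, g, d) \<in> A \<longrightarrow>
     (d \<le> b \<longrightarrow> (a + g, b - d, g, d) \<in> A) \<and> (b \<le> d \<longrightarrow> (a, b, g + a, d - b) \<in> A))"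

lemma reduction_closed_quadrant_bases: "reduction_closed (quadrant_bases u v)"
  unfolding reduction_closed_def
proof (intro allI impI conjI)
  fix a b g d assume s: "(a, b, g, d) \<in> quadrant_bases u v"
  then have l: "(- a, b) \<in> lattice u v" and r: "(g, d) \<in> lattice u v"
    by (auto simp: quadrant_bases_def)
  have "(- (a + g), b - d) \<in> lattice u v"
    using lattice_diff[OF l r] by simp
  then show "d \<le> b \<Longrightarrow> (a + g, b - d, g, d) \<in> quadrant_bases u v"
    using s by (auto simp: quadrant_bases_def algebra_simps)
  have "(g + a, d - b) \<in> lattice u v"
    using lattice_diff[OF r l] by simp
  then show "b \<le> d \<Longrightarrow> (a, b, g + a, d - b) \<in> quadrant_bases u v"
    using s by (auto simp: quadrant_bases_def algebra_simps)
qed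

definition F1 :: "(real \<times> real) set" where
  "F1 = {(1, 6), (2, 4), (3, 3), (4, 2), (6, 1)}"

lemma bilinear_le_by_widths:
  fixes a g b d \<alpha> \<gamma> c :: real
  assumes "a \<le> \<alpha>" "g \<le> \<gamma>" "0 \<le> b" "0 \<le> d" "\<alpha> * d + \<gamma> * b \<le> c"
  shows "a * d + b * g \<le> c"
proof -
  have "a * d \<le> \<alpha> * d" "b * g \<le> \<gamma> * b"
    using mult_right_mono[OF assms(1,4)] mult_left_mono[OF assms(2,3)] by (simp_all add: mult.commute)
  with assms(5) show ?thesis by linarith
qed

lemma bilinear_le_by_heights:
  fixes a g b d \<beta> \<delta> c :: real
  assumes "b \<le> \<beta>" "d \<le> \<delta>" "0 \<le> a" "0 \<le> g" "\<delta> * a + \<beta> * g \<le> c"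
  shows "a * d + b * g \<le> c"
proof -
  have "a * d \<le> \<delta> * a" "b * g \<le> \<beta> * g"
    using mult_left_mono[OF assms(2,3)] mult_right_mono[OF assms(1,4)] by (simp_all add: mult.commute)
  with assms(5) show ?thesis by linarith
qed

context
  fixes A :: "(real \<times> real \<times> real \<times> real) set"
  assumes closed: "reduction_closed A" and admissible: "box_admissible F1 A"
begin

lemma reduce_l:
  assumes "(a, b, g, d) \<in> A" "d \<le> b" "a' = a + g" "b' = b - d"
  shows "(a', b', g, d) \<in> A"
  using closed assms unfolding reduction_closed_def by blast

lemma reduce_r:
  assumes "(a, b, g, d) \<in> A" "b \<le> d" "g' = g + a" "d' = d - b"
  shows "(a, b, g', d') \<in> A"
  using closed assms unfolding reduction_closed_def by blast

lemma state_nonneg: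
  assumes "(a, b, g, d) \<in> A"
  shows "0 \<le> a" "0 \<le> b" "0 \<le> g" "0 \<le> d"
  using admissible assms unfolding box_admissible_def by fastforce+

lemma height_bound:
  assumes "(a, b, g, d) \<in> A"
  shows "1 < a + g \<Longrightarrow> b + d \<le> 6" "2 < a + g \<Longrightarrow> b + d \<le> 4" "3 < a + g \<Longrightarrow> b + d \<le> 3"
    "4 < a + g \<Longrightarrow> b + d \<le> 2" "6 < a + g \<Longrightarrow> b + d \<le> 1"
  using admissible assms unfolding box_admissible_def F1_def by fastforce+

text \<open>Case analysis along the reduction steps, the first one being l := l - r; a suffix such as
  \<open>llr\<close> lists the steps (l for l := l - r, r for r := r - l).\<close>

lemma covolume_le_5_lll:
  assumes s3: "(a + 3 * g, b - 3 * d, g, d) \<in> A"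
    and bounds: "0 \<le> a" "a \<le> 1" "0 \<le> g" "g \<le> 1" "2 < a + 2 * g" "0 \<le> d" "3 * d \<le> b" "b \<le> 4"
  shows "a * d + b * g \<le> 5"
proof (cases "4 * d \<le> b")
  case True
  show ?thesis by (rule bilinear_le_by_widths[of a 1 g 1]) (use True bounds in linarith)+
next
  case False
  have s4: "(a + 3 * g, b - 3 * d, a + 4 * g, 4 * d - b) \<in> A"
    by (rule reduce_r[OF s3]) (use False in linarith)+
  show ?thesis
  proof (cases "2 * a + 7 * g \<le> 6")
    case True
    show ?thesis by (rule bilinear_le_by_widths[of a 1 g "2/3"]) (use True bounds in linarith)+
  next
    case False
    then have H4: "d \<le> 1" using height_bound(5)[OF s4] by linarith
    show ?thesis by (rule bilinear_le_by_widths[of a 1 g 1]) (use H4 bounds in linarith)+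
  qed
qed

lemma covolume_le_5_llr:
  assumes s2: "(a + 2 * g, b - 2 * d, g, d) \<in> A"
    and bounds: "0 \<le> a" "a \<le> 1" "0 \<le> g" "g \<le> 1" "2 < a + 2 * g" "0 \<le> d" "2 * d \<le> b" "b \<le> 3 * d" "b \<le> 4"
  shows "a * d + b * g \<le> 5"
proof -
  have s3: "(a + 2 * g, b - 2 * d, a + 3 * g, 3 * d - b) \<in> A"
    by (rule reduce_r[OF s2]) (use bounds in linarith)+
  show ?thesis
  proof (cases "2 * a + 5 * g \<le> 6")
    case W3: True
    show ?thesis
    proof (cases "5 * d \<le> 2 * b")
      case True
      show ?thesis by (rule bilinear_le_by_heights[of b 4 d "8/5"]) (use W3 True bounds in linarith)+
    next
      case False
      have "(a + 2 * g, b - 2 * d, 2 * a + 5 * g, 5 * d - 2 * b) \<in> A"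
        by (rule reduce_r[OF s3]) (use False in linarith)+
      then have H4: "3 * d - b \<le> 1" using height_bound(5) bounds by fastforce
      show ?thesis by (rule bilinear_le_by_heights[of b 4 d "5/3"]) (use H4 W3 bounds in linarith)+
    qed
  next
    case False
    then have H3: "d \<le> 1" using height_bound(5)[OF s3] by linarith
    show ?thesis by (rule bilinear_le_by_widths[of a 1 g 1]) (use H3 bounds in linarith)+
  qed
qed

lemma covolume_le_5_ll:
  assumes s0: "(a, b, g, d) \<in> A" and bounds: "a \<le> 1" "g \<le> 1" "1 < a + g" "2 * d \<le> b"
  shows "a * d + b * g \<le> 5"
proof -
  note nonneg = state_nonneg[OF s0]
  have s1: "(a + g, b - d, g, d) \<in> A" by (rule reduce_l[OF s0]) (use nonneg bounds in linarith)+
  have s2: "(a + 2 * g, b - 2 * d, g, d) \<in> A" by (rule reduce_l[OF s1]) (use bounds in linarith)+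
  have H0: "b + d \<le> 6" using height_bound(1)[OF s0] bounds by linarith
  show ?thesis
  proof (cases "a + 3 * g \<le> 2")
    case True
    show ?thesis by (rule bilinear_le_by_widths[of a 1 g "1/2"]) (use True H0 nonneg bounds in linarith)+
  next
    case False
    then have H2: "b - d \<le> 4" using height_bound(2)[OF s2] by linarith
    show ?thesis
    proof (cases "a + 2 * g \<le> 2")
      case True
      show ?thesis by (rule bilinear_le_by_heights[of b 5 d 2]) (use True H0 H2 nonneg bounds in linarith)+
    next
      case False
      then have H1: "b \<le> 4" using height_bound(2)[OF s1] by linarith
      show ?thesis
      proof (cases "3 * d \<le> b")
        case True
        have "(a + 3 * g, b - 3 * d, g, d) \<in> A" by (rule reduce_l[OF s2]) (use True in linarith)+
        then show ?thesis by (rule covolume_le_5_lll) (use True False H1 nonneg bounds in linarith)+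
      next
        case True: False
        show ?thesis by (rule covolume_le_5_llr[OF s2]) (use True False H1 nonneg bounds in linarith)+
      qed
    qed
  qed
qed

lemma covolume_le_5_lrr:
  assumes s2: "(a + g, b - d, a + 2 * g, 2 * d - b) \<in> A"
    and bounds: "0 \<le> a" "a \<le> 1" "0 \<le> g" "g \<le> 1" "2 < a + 2 * g" "0 \<le> b" "b + d \<le> 6" "2 * b \<le> 3 * d"
  shows "a * d + b * g \<le> 5"
proof (cases "2 * a + 3 * g \<le> 4")
  case W2: True
  show ?thesis
  proof (cases "4 * d \<le> 3 * b")
    case True
    show ?thesis by (rule bilinear_le_by_heights[of b "18/5" d "18/7"]) (use W2 True bounds in linarith)+
  next
    case False
    have s3: "(a + g, b - d, 2 * a + 3 * g, 3 * d - 2 * b) \<in> A"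
      by (rule reduce_r[OF s2]) (use bounds in linarith)+
    show ?thesis
    proof (cases "3 * a + 4 * g \<le> 4")
      case True
      show ?thesis by (rule bilinear_le_by_widths[of a 0 g 1]) (use True False bounds in linarith)+
    next
      case W3: False
      then have H3: "2 * d - b \<le> 2" using height_bound(4)[OF s3] by linarith
      show ?thesis by (rule bilinear_le_by_heights[of b "24/7" d "8/3"]) (use H3 W2 False bounds in linarith)+
    qed
  qed
next
  case False
  then have H2: "d \<le> 2" using height_bound(4)[OF s2] by linarith
  show ?thesis by (rule bilinear_le_by_widths[of a 1 g 1]) (use H2 bounds in linarith)+
qed

lemma covolume_le_5_lr:
  assumes s0: "(a, b, g, d) \<in> A" and bounds: "a \<le> 1" "g \<le> 1" "1 < a + g" "d \<le> b" "b \<le> 2 * d"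
  shows "a * d + b * g \<le> 5"
proof -
  note nonneg = state_nonneg[OF s0]
  have s1: "(a + g, b - d, g, d) \<in> A" by (rule reduce_l[OF s0]) (use bounds in linarith)+
  have s2: "(a + g, b - d, a + 2 * g, 2 * d - b) \<in> A" by (rule reduce_r[OF s1]) (use bounds in linarith)+
  have H0: "b + d \<le> 6" using height_bound(1)[OF s0] bounds by linarith
  show ?thesis
  proof (cases "a + 2 * g \<le> 2")
    case True
    show ?thesis by (rule bilinear_le_by_heights[of b 4 d 3]) (use True H0 nonneg bounds in linarith)+
  next
    case W1: False
    then have H1: "b \<le> 4" using height_bound(2)[OF s1] by linarith
    show ?thesis
    proof (cases "3 * d \<le> 2 * b")
      case True
      have s3: "(2 * a + 3 * g, 2 * b - 3 * d, a + 2 * g, 2 * d - b) \<in> A"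
        by (rule reduce_l[OF s2]) (use True in linarith)+
      show ?thesis
      proof (cases "3 * a + 5 * g \<le> 6")
        case W3: True
        show ?thesis
          by (rule bilinear_le_by_heights[of b 4 d "12/5"]) (use W3 True H0 H1 nonneg bounds in linarith)+
      next
        case False
        then have H3: "b - d \<le> 1" using height_bound(5)[OF s3] by linarith
        show ?thesis by (rule bilinear_le_by_widths[of a 1 g 1]) (use H3 True nonneg bounds in linarith)+
      qed
    next
      case False
      show ?thesis by (rule covolume_le_5_lrr[OF s2]) (use False W1 H0 nonneg bounds in linarith)+
    qed
  qed
qed

lemma covolume_le_5_l:
  assumes "(a, b, g, d) \<in> A" "a \<le> 1" "g \<le> 1" "1 < a + g" "d \<le> b"
  shows "a * d + b * g \<le> 5"
proof (cases "2 * d \<le> b")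
  case True
  then show ?thesis using covolume_le_5_ll assms by blast
next
  case False
  then show ?thesis using covolume_le_5_lr assms by simp
qed

end

text \<open>The basis \<open>swap_basis (a, b, g, d)\<close> is the mirror image of (a, b, g, d) in the vertical axis.\<close>

fun swap_basis :: "real \<times> real \<times> real \<times> real \<Rightarrow> real \<times> real \<times> real \<times> real" where
  "swap_basis (a, b, g, d) = (g, d, a, b)"

lemma swap_basis_mem_image_iff: "(g, d, a, b) \<in> swap_basis ` A \<longleftrightarrow> (a, b, g, d) \<in> A"
proof
  assume "(g, d, a, b) \<in> swap_basis ` A"
  then obtain a' b' g' d' where "(a', b', g', d') \<in> A" "(g, d, a, b) = swap_basis (a', b', g', d')"
    by (metis imageE prod_cases4)
  then show "(a, b, g, d) \<in> A" by simp
next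
  assume "(a, b, g, d) \<in> A"
  then show "(g, d, a, b) \<in> swap_basis ` A" by (rule rev_image_eqI) simp
qed

lemma reduction_closed_swap_basis:
  assumes "reduction_closed A"
  shows "reduction_closed (swap_basis ` A)"
  unfolding reduction_closed_def
proof (intro allI impI conjI)
  fix g d a b assume "(g, d, a, b) \<in> swap_basis ` A"
  then have s: "(a, b, g, d) \<in> A" by (simp add: swap_basis_mem_image_iff)
  show "(g + a, d - b, a, b) \<in> swap_basis ` A" if "b \<le> d"
    using assms s that unfolding reduction_closed_def swap_basis_mem_image_iff by blast
  show "(g, d, a + g, b - d) \<in> swap_basis ` A" if "d \<le> b"
    using assms s that unfolding reduction_closed_def swap_basis_mem_image_iff by blast
qed

lemma box_admissible_swap_basis:
  assumes "box_admissible F A"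
  shows "box_admissible F (swap_basis ` A)"
  unfolding box_admissible_def
proof (intro allI impI)
  fix g d a b assume "(g, d, a, b) \<in> swap_basis ` A"
  with assms show "0 \<le> g \<and> 0 \<le> d \<and> 0 \<le> a \<and> 0 \<le> b \<and>
      (\<forall>R\<in>F. \<not> (fst R < g + a \<and> snd R < d + b))"
    unfolding box_admissible_def swap_basis_mem_image_iff by (simp add: add.commute)
qed

lemma covolume_le_5:
  assumes closed: "reduction_closed A" and admissible: "box_admissible F1 A"
    and s: "(a, b, g, d) \<in> A" and bounds: "a \<le> 1" "g \<le> 1" "1 < a + g"
  shows "a * d + b * g \<le> 5"
proof (cases "d \<le> b")
  case True
  with covolume_le_5_l[OF closed admissible s bounds] show ?thesis .
next
  case False
  have "(g, d, a, b) \<in> swap_basis ` A"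
    using s by (simp add: swap_basis_mem_image_iff)
  from covolume_le_5_l[OF reduction_closed_swap_basis[OF closed] box_admissible_swap_basis[OF admissible] this]
  have "g * b + d * a \<le> 5" using False bounds by simp
  then show ?thesis by (simp add: algebra_simps)
qed

text \<open>Each step adds \<open>a\<close> or \<open>g\<close>, hence at least \<open>m\<close>, to the width \<open>a + g\<close>.\<close>

lemma reduction_widens:
  assumes closed: "reduction_closed A" and m: "0 < m"
  shows "(a, b, g, d) \<in> A \<Longrightarrow> m \<le> a \<Longrightarrow> m \<le> g \<Longrightarrow> a \<le> 1 \<Longrightarrow> g \<le> 1 \<Longrightarrow>
    1 < a + g + real n * m \<Longrightarrow>
    \<exists>a' b' g' d'. (a', b', g', d') \<in> A \<and> a' \<le> 1 \<and> g' \<le> 1 \<and> 1 < a' + g'"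
proof (induction n arbitrary: a b g d)
  case 0
  then show ?case by auto
next
  case (Suc n)
  show ?case
  proof (cases "1 < a + g")
    case True
    with Suc.prems show ?thesis by blast
  next
    case False
    consider "d \<le> b" | "b \<le> d" by linarith
    then show ?thesis
    proof cases
      case 1
      with Suc.prems(1) closed have "(a + g, b - d, g, d) \<in> A"
        unfolding reduction_closed_def by blast
      then show ?thesis by (rule Suc.IH) (use Suc.prems False m in \<open>auto simp: algebra_simps\<close>)
    next
      case 2
      with Suc.prems(1) closed have "(a, b, g + a, d - b) \<in> A"
        unfolding reduction_closed_def by blast
      then show ?thesis by (rule Suc.IH) (use Suc.prems False m in \<open>auto simp: algebra_simps\<close>)
    qed
  qed
qed

lemma exists_wide_state:
  assumes closed: "reduction_closed A" and s: "(a, b, g, d) \<in> A"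
    and bounds: "0 < a" "0 < g" "a \<le> 1" "g \<le> 1"
  shows "\<exists>a b g d. (a, b, g, d) \<in> A \<and> a \<le> 1 \<and> g \<le> 1 \<and> 1 < a + g"
proof -
  obtain n where "1 < real n * min a g"
    using ex_less_of_nat_mult[of "min a g" 1] bounds by auto
  with reduction_widens[OF closed _ s, of "min a g" n] bounds show ?thesis by auto
qed

lemma quadrant_basis_exists:
  assumes D: "det2 u v \<noteq> 0" and pierce: "piercing F1 (lattice u v)" and big: "5 < \<bar>det2 u v\<bar>"
  shows "\<exists>a b g d. (a, b, g, d) \<in> quadrant_bases u v \<and> 0 < a \<and> a \<le> 1 \<and> 0 < g \<and> g \<le> 1"
proof -
  have strip: "\<exists>z\<in>lattice u v. 0 < fst z \<and> fst z \<le> 1 \<and> c \<le> snd z \<and> snd z \<le> c + 6" for c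
    using lattice_point_in_strip[OF D pierce, of 1 6 c] by (simp add: F1_def)
  \<comment> \<open>The windows below keep \<open>b + d \<le> 19/2 < 2 * \<bar>det2 u v\<bar>\<close>, so the two points form a basis.\<close>
  have basis: "(a, b, g, d) \<in> quadrant_bases u v"
    if l: "(- a, b) \<in> lattice u v" and r: "(g, d) \<in> lattice u v"
      and bounds: "0 < a" "a \<le> 1" "0 < g" "g \<le> 1" "0 \<le> b" "0 \<le> d" "0 < b + d" "b + d \<le> 19/2"
    for a b g d
  proof -
    have "0 < a * d + b * g"
      using bounds by (cases "0 < b") (auto simp: add_pos_nonneg add_nonneg_pos)
    moreover have "a * d + b * g \<le> b + d"
      by (rule bilinear_le_by_widths[of a 1 g 1]) (use bounds in auto)
    moreover have "\<bar>det2 (- a, b) (g, d)\<bar> = a * d + b * g"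
      using calculation(1) by (simp add: det2_def)
    ultimately have "a * d + b * g = \<bar>det2 u v\<bar>"
      using det2_lattice_unimodular[OF l r] big bounds by simp
    with l r bounds show ?thesis by (simp add: quadrant_bases_def)
  qed
  obtain z where z: "z \<in> lattice u v" "0 < fst z" "fst z \<le> 1" "-3 \<le> snd z" "snd z \<le> 3"
    using strip[of "-3"] by auto
  show ?thesis
  proof (cases "0 \<le> snd z")
    case True
    obtain w where w: "w \<in> lattice u v" "0 < fst w" "fst w \<le> 1" "-13/2 \<le> snd w" "snd w \<le> -1/2"
      using strip[of "-13/2"] by auto
    have "(fst w, - snd w, fst z, snd z) \<in> quadrant_bases u v"
      by (rule basis) (use lattice_uminus[OF w(1)] z w True in \<open>auto simp: uminus_prod_def\<close>)
    with z w show ?thesis by blast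
  next
    case False
    obtain w where w: "w \<in> lattice u v" "0 < fst w" "fst w \<le> 1" "1/2 \<le> snd w" "snd w \<le> 13/2"
      using strip[of "1/2"] by auto
    have "(fst z, - snd z, fst w, snd w) \<in> quadrant_bases u v"
      by (rule basis) (use lattice_uminus[OF z(1)] z w False in \<open>auto simp: uminus_prod_def\<close>)
    with z w show ?thesis by blast
  qed
qed

theorem piercing_lattice_covolume_le_5:
  assumes D: "det2 u v \<noteq> 0" and pierce: "piercing F1 (lattice u v)"
  shows "\<bar>det2 u v\<bar> \<le> 5"
proof (rule ccontr)
  assume big: "\<not> \<bar>det2 u v\<bar> \<le> 5"
  obtain a b g d where "(a, b, g, d) \<in> quadrant_bases u v" "0 < a" "0 < g" "a \<le> 1" "g \<le> 1"
    using quadrant_basis_exists[OF D pierce] big by auto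
  then obtain a b g d where s: "(a, b, g, d) \<in> quadrant_bases u v" "a \<le> 1" "g \<le> 1" "1 < a + g"
    using exists_wide_state[OF reduction_closed_quadrant_bases] by blast
  have "a * d + b * g \<le> 5"
    using covolume_le_5[OF reduction_closed_quadrant_bases box_admissible_quadrant_bases[OF D pierce] s] .
  moreover have "a * d + b * g = \<bar>det2 u v\<bar>"
    using s(1) by (simp add: quadrant_bases_def)
  ultimately show False using big by simp
qed

definition pattern_row :: "int \<Rightarrow> int" where
  "pattern_row i = [0, 2, 4, 1, 5, 3] ! nat (i mod 6)"

lemma pattern_meets_windows:
  assumes "(p, q) \<in> {(1, 6), (2, 4), (3, 3), (4, 2), (6, 1)}"
  shows "\<exists>k<p. \<exists>m<q. (j + int m) mod 6 = pattern_row (i + int k)"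
proof -
  have "\<forall>r<6. \<forall>s<6. \<exists>k<p. \<exists>m<q. (int s + int m) mod 6 = pattern_row (int r + int k)"
    using assms by (elim insertE emptyE) (simp_all add: pattern_row_def All_less_Suc Ex_less_Suc numeral_eq_Suc)
  moreover have "nat (i mod 6) < 6" "nat (j mod 6) < 6"
    by (simp_all add: nat_less_iff)
  ultimately obtain k m where "k < p" "m < q"
    "(int (nat (j mod 6)) + int m) mod 6 = pattern_row (int (nat (i mod 6)) + int k)"
    by blast
  then show ?thesis
    by (auto simp: pattern_row_def mod_add_left_eq)
qed

definition periodic_piercing_set :: "(real \<times> real) set" where
  "periodic_piercing_set = {(of_int i, of_int j) | i j. j mod 6 = pattern_row i}"

lemma F1_integer_sizes: "F1 = (\<lambda>(p, q). (real p, real q)) ` {(1, 6), (2, 4), (3, 3), (4, 2), (6, 1)}"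
  by (simp add: F1_def)

lemma periodic_piercing_set_piercing: "piercing F1 periodic_piercing_set"
  unfolding piercing_def
proof (intro ballI allI)
  fix R and t :: "real \<times> real"
  assume "R \<in> F1"
  then obtain p q where pq: "(p, q) \<in> {(1, 6), (2, 4), (3, 3), (4, 2), (6, 1)}" and R: "R = (real p, real q)"
    unfolding F1_integer_sizes by (elim imageE) (simp add: case_prod_beta prod_eq_iff; metis prod.collapse)
  define i where "i = \<lceil>fst t\<rceil>"
  define j where "j = \<lceil>snd t\<rceil>"
  obtain k m where km: "k < p" "m < q" "(j + int m) mod 6 = pattern_row (i + int k)"
    using pattern_meets_windows[OF pq] by blast
  have "(of_int (i + int k), of_int (j + int m)) \<in> periodic_piercing_set"
    using km(3) unfolding periodic_piercing_set_def by blast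
  moreover have "fst t \<le> of_int i" "of_int i < fst t + 1" "snd t \<le> of_int j" "of_int j < snd t + 1"
    unfolding i_def j_def by linarith+
  with km(1,2) have "(of_int (i + int k), of_int (j + int m)) \<in> translate_rect R t"
    unfolding R translate_rect_def by (auto simp: mem_Times_iff)
  ultimately show "\<exists>z\<in>periodic_piercing_set. z \<in> translate_rect R t" by blast
qed

lemma periodic_piercing_set_square_subset:
  fixes r :: real
  defines "N \<equiv> \<lfloor>r\<rfloor>" and "Q \<equiv> \<lceil>r / 6\<rceil> + 1"
  shows "periodic_piercing_set \<inter> ({-r..r} \<times> {-r..r}) \<subseteq>
    (\<lambda>(i, q). (of_int i, of_int (6 * q + pattern_row i))) ` ({-N..N} \<times> {-Q..Q})"
proof
  fix z assume "z \<in> periodic_piercing_set \<inter> ({-r..r} \<times> {-r..r})"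
  then obtain i j where z: "z = (of_int i, of_int j)" and ij: "j mod 6 = pattern_row i"
    and box: "\<bar>of_int i\<bar> \<le> r" "\<bar>of_int j\<bar> \<le> r"
    unfolding periodic_piercing_set_def by auto
  define q where "q = j div 6"
  have j: "j = 6 * q + pattern_row i"
    using ij div_mult_mod_eq[of j 6] unfolding q_def by linarith
  have "0 \<le> j mod 6" "j mod 6 < 6" by simp_all
  then have "6 * of_int q \<le> r" "- r - 5 \<le> 6 * of_int q"
    using box ij j by (simp_all add: abs_le_iff)
  then have "of_int q \<le> real_of_int Q" "- real_of_int Q \<le> of_int q"
    using le_of_int_ceiling[of "r / 6"] unfolding Q_def of_int_add of_int_1 by linarith+
  moreover have "\<bar>i\<bar> \<le> N"
    using box unfolding N_def by (simp add: le_floor_iff flip: of_int_abs)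
  ultimately show "z \<in> (\<lambda>(i, q). (of_int i, of_int (6 * q + pattern_row i))) ` ({-N..N} \<times> {-Q..Q})"
    using z j by (intro image_eqI[of _ _ "(i, q)"]) auto
qed

lemma card_periodic_piercing_set_square:
  fixes r :: real
  assumes r: "1 \<le> r"
  defines "S \<equiv> periodic_piercing_set \<inter> ({-r..r} \<times> {-r..r})"
  shows "finite S \<and> real (card S) \<le> (2 * r + 1) * (r / 3 + 5)"
proof -
  define N where "N = \<lfloor>r\<rfloor>"
  define Q where "Q = \<lceil>r / 6\<rceil> + 1"
  define point where "point = (\<lambda>(i, q). (of_int i :: real, of_int (6 * q + pattern_row i) :: real))"
  have sub: "S \<subseteq> point ` ({-N..N} \<times> {-Q..Q})"
    using periodic_piercing_set_square_subset[of r] unfolding S_def N_def Q_def point_def .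
  have fin: "finite (point ` ({-N..N} \<times> {-Q..Q}))" by simp
  have "card S \<le> card ({-N..N} \<times> {-Q..Q})"
    using card_mono[OF fin sub] card_image_le[of "{-N..N} \<times> {-Q..Q}" point] by simp
  also have "\<dots> = nat (2 * N + 1) * nat (2 * Q + 1)"
    by (simp add: card_cartesian_product)
  finally have "real (card S) \<le> real (nat (2 * N + 1)) * real (nat (2 * Q + 1))"
    by (metis of_nat_le_iff of_nat_mult)
  also have "\<dots> = (2 * of_int N + 1) * (2 * of_int Q + 1)"
    using r unfolding N_def Q_def by simp
  also have "\<dots> \<le> (2 * r + 1) * (r / 3 + 5)"
  proof (rule mult_mono)
    show "2 * of_int N + 1 \<le> 2 * r + 1"
      using of_int_floor_le[of r] unfolding N_def by linarith
    show "2 * of_int Q + 1 \<le> r / 3 + 5" "0 \<le> 2 * real_of_int Q + 1"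
      using of_int_ceiling_le_add_one[of "r / 6"] le_of_int_ceiling[of "r / 6"] r
      unfolding Q_def by (simp_all add: algebra_simps)
  qed (use r in simp)
  finally show ?thesis using finite_subset[OF sub fin] by simp
qed

lemma density_periodic_piercing_set: "density periodic_piercing_set \<le> ereal (1 / 6)"
proof -
  define bound where "bound r = (2 * r + 1) * (r / 3 + 5) / (2 * r)\<^sup>2" for r :: real
  have "\<forall>\<^sub>F r in at_top. ecount (periodic_piercing_set \<inter> ({-r..r} \<times> {-r..r})) * ereal (1 / (2 * r)\<^sup>2)
      \<le> ereal (bound r)"
    using eventually_ge_at_top[of "1::real"]
  proof eventually_elim
    case (elim r)
    then have "0 < (2 * r)\<^sup>2" by simp
    with card_periodic_piercing_set_square[OF elim] show ?case
      by (simp add: ecount_def bound_def divide_right_mono)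
  qed
  then have "density periodic_piercing_set \<le> Limsup at_top (\<lambda>r. ereal (bound r))"
    unfolding density_def by (rule Limsup_mono)
  also have "(bound \<longlongrightarrow> 1 / 6) at_top"
    unfolding bound_def by real_asymp
  then have "Limsup at_top (\<lambda>r. ereal (bound r)) = ereal (1 / 6)"
    by (intro lim_imp_Limsup tendsto_ereal) simp_all
  finally show ?thesis .
qed

lemma pi_L_F1_ge: "ereal (1 / 5) \<le> pi_L F1"
  unfolding pi_L_def
proof (rule Inf_greatest, clarify)
  fix u v assume "det2 u v \<noteq> 0" "piercing F1 (lattice u v)"
  with piercing_lattice_covolume_le_5 show "ereal (1 / 5) \<le> ereal (1 / \<bar>det2 u v\<bar>)"
    by (simp add: frac_le)
qed

lemma pi_dens_F1_le: "pi_dens F1 \<le> ereal (1 / 6)"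
  unfolding pi_dens_def using periodic_piercing_set_piercing density_periodic_piercing_set
  by (blast intro: Inf_lower2)

theorem theorem6:
  shows "\<exists>F. finite F \<and> card F = 5 \<and> (\<forall>R\<in>F. is_rect R) \<and>
           pi_L F \<ge> ereal (6/5) * pi_dens F"
proof (intro exI[of _ F1] conjI)
  show "finite F1" "card F1 = 5" "\<forall>R\<in>F1. is_rect R"
    by (simp_all add: F1_def is_rect_def)
  have "ereal (6 / 5) * pi_dens F1 \<le> ereal (6 / 5) * ereal (1 / 6)"
    using pi_dens_F1_le by (rule ereal_mult_left_mono) simp
  with pi_L_F1_ge show "pi_L F1 \<ge> ereal (6 / 5) * pi_dens F1"
    by simp
qed

end
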